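(* Let $\mathbf S=\operatorname{diag}(\lambda_i)_{i=1}^d$, $\mathbf M=\operatorname{diag}(m_i)_{i=1}^d$ with $\lambda_i,m_i>0$, $\mathbf R=\operatorname{diag}(r_i)_{i=1}^d$ with $r_i\ge0$, $\sigma>0$, $n\ge1$, and set $\mathbf R'=\mathbf M^{-1/2}\mathbf R\mathbf M^{-1/2}$, $\mathbf S'=\mathbf M^{-1/2}\mathbf S\mathbf M^{-1/2}$. For $\tau\ge0$ let $\mathbb K_\tau=\{k\in[d]:r_k/m_k>\tau^2\}$. Then $$\inf_{\mathbf A\in\mathbb R^{d\times d}}\frac1{\pi^2}\|(\mathbf I-\mathbf A)^\top\mathbf R'(\mathbf I-\mathbf A)\|+\frac{\sigma^2}{n}\langle\mathbf R',\mathbf A(\mathbf S')^{-1}\mathbf A^\top\rangle=\inf_{\tau\ge0}\Big[\frac{\tau^2}{\pi^2}+\sum_{i\in\mathbb K_\tau}\Big(1-\tau\sqrt{\tfrac{m_i}{r_i}}\Big)^2\frac{\sigma^2r_i}{n\lambda_i}\Big]\ \ge\ \frac14\inf_{\tau\ge0}\Big[\frac{\tau^2}{\pi^2}+\sum_{i\in\mathbb K_\tau}\frac{\sigma^2r_i}{n\lambda_i}\Big].$$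
   Context: $\|\cdot\|$ is the spectral norm and $\langle\mathbf A,\mathbf B\rangle=\operatorname{tr}(\mathbf A^\top\mathbf B)$; $[d]=\{1,\dots,d\}$. *)

theory Defs
  imports "HOL-Analysis.Analysis"
begin

definition diag_mat :: "('n::finite \<Rightarrow> real) \<Rightarrow> real^'n^'n" where
  "diag_mat f = (\<chi> i j. if i = j then f i else 0)"

definition spec_norm :: "real^'n::finite^'m::finite \<Rightarrow> real" where
  "spec_norm A = onorm (\<lambda>x. A *v x)"

definition frob_inner :: "real^'n::finite^'n \<Rightarrow> real^'n^'n \<Rightarrow> real" where
  "frob_inner A B = trace (transpose A ** B)"

end

theory Submission imports Defs begin

(* After the change of variables, R' = diag(rho) with rho_i = r_i/m_i and (S')^-1 = diag(m/lambda),
   so the problem is diagonal. For any A put tau^2 = ||(I - A)^T R' (I - A)||: its diagonal entries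
   give rho_i (1 - A_ii)^2 <= tau^2, hence A_ii^2 >= (1 - tau/sqrt rho_i)^2 whenever rho_i > tau^2,
   and discarding the off-diagonal entries of the variance term shows that A costs at least the
   right-hand side at tau. Conversely the diagonal shrinkage A_ii = (1 - tau/sqrt rho_i)^+ attains
   it. For the factor 1/4, compare with the hard-threshold profile at 2 tau: every index retained
   there has shrinkage factor 1 - tau/sqrt rho_i >= 1/2. *)

lemma diag_mat_nth: "diag_mat f $ i $ j = (if i = j then f i else 0)"
  by (simp add: diag_mat_def)

lemma diag_mat_mult_left: "(diag_mat f ** X) $ i $ j = f i * X $ i $ j"
proof -
  have "(\<Sum>k\<in>UNIV. (if i = k then f i else 0) * X $ k $ j) = (\<Sum>k\<in>UNIV. if k = i then f i * X $ i $ j else 0)"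
    by (rule sum.cong) auto
  then show ?thesis by (simp add: diag_mat_def matrix_matrix_mult_def)
qed

lemma diag_mat_mult_right: "(X ** diag_mat f) $ i $ j = X $ i $ j * f j"
proof -
  have "(\<Sum>k\<in>UNIV. X $ i $ k * (if k = j then f k else 0)) = (\<Sum>k\<in>UNIV. if k = j then X $ i $ j * f j else 0)"
    by (rule sum.cong) auto
  then show ?thesis by (simp add: diag_mat_def matrix_matrix_mult_def)
qed

lemma diag_mat_mult_diag_mat: "diag_mat f ** diag_mat g = diag_mat (\<lambda>i. f i * g i)"
  by (simp add: vec_eq_iff diag_mat_mult_left diag_mat_nth)

lemma transpose_diag_mat [simp]: "transpose (diag_mat f) = diag_mat f"
  by (simp add: vec_eq_iff transpose_def diag_mat_nth)

lemma mat_1_minus_diag_mat: "mat 1 - diag_mat f = diag_mat (\<lambda>i. 1 - f i)"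
  by (simp add: vec_eq_iff mat_def diag_mat_nth)

lemma diag_mat_inv_sqrt_congruence:
  assumes "\<And>i. 0 < m i"
  shows "diag_mat (\<lambda>i. 1 / sqrt (m i)) ** diag_mat f ** diag_mat (\<lambda>i. 1 / sqrt (m i))
       = diag_mat (\<lambda>i. f i / m i)"
proof -
  have "1 / sqrt (m i) * f i * (1 / sqrt (m i)) = f i / m i" for i
    using assms[of i] by (simp add: field_simps)
  then show ?thesis
    unfolding diag_mat_mult_diag_mat by (simp only:)
qed

lemma diag_mat_mult_vec: "diag_mat f *v x = (\<chi> i. f i * x $ i)"
proof -
  have "\<And>i. (\<Sum>j\<in>UNIV. (if i = j then f i else 0) * x $ j) = (\<Sum>j\<in>UNIV. if j = i then f i * x $ i else 0)"
    by (rule sum.cong) auto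
  then show ?thesis by (simp add: vec_eq_iff matrix_vector_mult_def diag_mat_def)
qed

lemma matrix_inv_eqI:
  fixes A B :: "'a::comm_ring_1^'n^'n"
  assumes "A ** B = mat 1" and "B ** A = mat 1"
  shows "matrix_inv A = B"
proof -
  let ?P = "\<lambda>B'. A ** B' = mat 1 \<and> B' ** A = mat 1"
  have "?P (SOME B'. ?P B')"
    using someI[of ?P B] assms by blast
  then have "(SOME B'. ?P B') = (B ** A) ** (SOME B'. ?P B')"
    using assms by simp
  also have "\<dots> = B"
    using \<open>?P (SOME B'. ?P B')\<close> by (simp add: matrix_mul_assoc[symmetric])
  finally show ?thesis
    unfolding matrix_inv_def by simp
qed

lemma matrix_inv_diag_mat:
  assumes "\<And>i. f i \<noteq> (0::real)"
  shows "matrix_inv (diag_mat f) = diag_mat (\<lambda>i. 1 / f i)"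
  using assms
  by (intro matrix_inv_eqI) (simp_all add: diag_mat_mult_diag_mat vec_eq_iff diag_mat_nth mat_def)

lemma spec_norm_diag_mat_le:
  assumes "\<And>i. \<bar>f i\<bar> \<le> b"
  shows "spec_norm (diag_mat f) \<le> b"
  unfolding spec_norm_def
proof (rule onorm_le)
  fix x :: "real^'a"
  have "b \<ge> 0" using assms[of undefined] by simp
  have "norm (diag_mat f *v x) \<le> norm (b *s x)"
    by (rule norm_le_componentwise_cart)
      (simp add: diag_mat_mult_vec abs_mult mult_right_mono assms \<open>b \<ge> 0\<close>)
  also have "\<dots> = b * norm x"
    using \<open>b \<ge> 0\<close> by (simp add: scalar_mult_eq_scaleR)
  finally show "norm (diag_mat f *v x) \<le> b * norm x" .
qed

lemma diagonal_entry_le_spec_norm: "B $ i $ i \<le> spec_norm (B::real^'n::finite^'n)"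
proof -
  have "(\<Sum>j\<in>UNIV. B $ i $ j * (if j = i then 1 else 0)) = (\<Sum>j\<in>UNIV. if j = i then B $ i $ i else 0)"
    by (rule sum.cong) auto
  then have "B $ i $ i = (B *v axis i 1) $ i"
    by (simp add: matrix_vector_mult_def axis_def)
  also have "\<dots> \<le> norm (B *v axis i 1)"
    by (metis component_le_norm_cart abs_le_D1)
  also have "\<dots> \<le> spec_norm B * norm (axis i (1::real))"
    unfolding spec_norm_def by (rule onorm[OF matrix_vector_mul_bounded_linear])
  finally show ?thesis by simp
qed

lemma spec_norm_nonneg: "0 \<le> spec_norm (B::real^'n::finite^'m::finite)"
  unfolding spec_norm_def by (rule onorm_pos_le[OF matrix_vector_mul_bounded_linear])

lemma diag_mat_congruence_nth:
  "(transpose C ** diag_mat \<rho> ** C) $ i $ i = (\<Sum>k\<in>UNIV. \<rho> k * (C $ k $ i)\<^sup>2)"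
  unfolding matrix_matrix_mult_def[of "transpose C ** diag_mat \<rho>"]
  by (simp add: diag_mat_mult_right transpose_def power2_eq_square mult_ac)

lemma frob_inner_diag_mat_congruence:
  "frob_inner (diag_mat \<rho>) (A ** diag_mat \<mu> ** transpose A)
     = (\<Sum>i\<in>UNIV. \<rho> i * (\<Sum>j\<in>UNIV. (A $ i $ j)\<^sup>2 * \<mu> j))"
proof -
  have "(A ** diag_mat \<mu> ** transpose A) $ i $ i = (\<Sum>j\<in>UNIV. (A $ i $ j)\<^sup>2 * \<mu> j)" for i
    by (simp add: matrix_matrix_mult_def[of "A ** diag_mat \<mu>"] diag_mat_mult_right transpose_def
        power2_eq_square mult_ac)
  then show ?thesis
    unfolding frob_inner_def trace_def transpose_diag_mat diag_mat_mult_left by simp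
qed

lemma frob_inner_diag_mat: "frob_inner (diag_mat f) (diag_mat g) = (\<Sum>i\<in>UNIV. f i * g i)"
  by (simp add: frob_inner_def trace_def diag_mat_mult_diag_mat diag_mat_nth)

definition bias_variance_objective ::
    "real \<Rightarrow> real \<Rightarrow> ('n::finite \<Rightarrow> real) \<Rightarrow> ('n \<Rightarrow> real) \<Rightarrow> real^'n^'n \<Rightarrow> real" where
  "bias_variance_objective a c \<rho> \<mu> A =
     a * spec_norm (transpose (mat 1 - A) ** diag_mat \<rho> ** (mat 1 - A))
     + c * frob_inner (diag_mat \<rho>) (A ** diag_mat \<mu> ** transpose A)"

definition shrinkage_risk :: "real \<Rightarrow> ('n::finite \<Rightarrow> real) \<Rightarrow> ('n \<Rightarrow> real) \<Rightarrow> real \<Rightarrow> real" where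
  "shrinkage_risk a \<rho> w \<tau> = a * \<tau>\<^sup>2 + (\<Sum>i | \<rho> i > \<tau>\<^sup>2. (1 - \<tau> / sqrt (\<rho> i))\<^sup>2 * w i)"

definition threshold_risk :: "real \<Rightarrow> ('n::finite \<Rightarrow> real) \<Rightarrow> ('n \<Rightarrow> real) \<Rightarrow> real \<Rightarrow> real" where
  "threshold_risk a \<rho> w \<tau> = a * \<tau>\<^sup>2 + (\<Sum>i | \<rho> i > \<tau>\<^sup>2. w i)"

lemma shrinkage_risk_nonneg:
  assumes "0 \<le> a" and "\<And>i. 0 \<le> w i"
  shows "0 \<le> shrinkage_risk a \<rho> w \<tau>"
  unfolding shrinkage_risk_def using assms by (intro add_nonneg_nonneg sum_nonneg) auto

lemma threshold_risk_nonneg: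
  assumes "0 \<le> a" and "\<And>i. 0 \<le> w i"
  shows "0 \<le> threshold_risk a \<rho> w \<tau>"
  unfolding threshold_risk_def using assms by (intro add_nonneg_nonneg sum_nonneg) auto

lemma shrinkage_factor_sq_le:
  fixes \<tau> \<rho> x :: real
  assumes "0 \<le> \<tau>" and "\<tau>\<^sup>2 < \<rho>" and "\<rho> * (1 - x)\<^sup>2 \<le> \<tau>\<^sup>2"
  shows "(1 - \<tau> / sqrt \<rho>)\<^sup>2 \<le> x\<^sup>2"
proof -
  have "\<tau> < sqrt \<rho>" using assms(2) by (rule real_less_rsqrt)
  then have "0 < sqrt \<rho>" using assms(1) by linarith
  have "sqrt \<rho> * \<bar>1 - x\<bar> \<le> \<tau>"
    using real_sqrt_le_mono[OF assms(3)] assms(1) by (simp add: real_sqrt_mult)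
  then have "\<bar>1 - x\<bar> \<le> \<tau> / sqrt \<rho>"
    using \<open>0 < sqrt \<rho>\<close> by (simp add: pos_le_divide_eq mult.commute)
  moreover have "\<tau> / sqrt \<rho> < 1"
    using \<open>\<tau> < sqrt \<rho>\<close> \<open>0 < sqrt \<rho>\<close> by simp
  ultimately show ?thesis
    by (intro power_mono) auto
qed

lemma shrinkage_factor_sq_ge_quarter:
  fixes \<tau> \<rho> :: real
  assumes "0 \<le> \<tau>" and "4 * \<tau>\<^sup>2 < \<rho>"
  shows "1 / 4 \<le> (1 - \<tau> / sqrt \<rho>)\<^sup>2"
proof -
  have "2 * \<tau> < sqrt \<rho>"
    using assms(2) by (intro real_less_rsqrt) (simp add: power_mult_distrib)
  then have "0 < sqrt \<rho>" using assms(1) by linarith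
  then have "\<tau> / sqrt \<rho> < 1 / 2"
    using \<open>2 * \<tau> < sqrt \<rho>\<close> by (simp add: divide_less_eq)
  moreover have "0 \<le> \<tau> / sqrt \<rho>" using assms(1) \<open>0 < sqrt \<rho>\<close> by simp
  ultimately have "(1 / 2)\<^sup>2 \<le> (1 - \<tau> / sqrt \<rho>)\<^sup>2"
    by (intro power_mono) auto
  then show ?thesis by (simp add: power_divide)
qed

lemma bias_variance_objective_ge_shrinkage_risk:
  fixes A :: "real^'n::finite^'n"
  assumes c: "0 \<le> c" and \<rho>: "\<And>i. 0 \<le> \<rho> i" and \<mu>: "\<And>i. 0 \<le> \<mu> i"
  defines "\<tau> \<equiv> sqrt (spec_norm (transpose (mat 1 - A) ** diag_mat \<rho> ** (mat 1 - A)))"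
  shows "shrinkage_risk a \<rho> (\<lambda>i. c * \<rho> i * \<mu> i) \<tau> \<le> bias_variance_objective a c \<rho> \<mu> A"
proof -
  let ?N = "spec_norm (transpose (mat 1 - A) ** diag_mat \<rho> ** (mat 1 - A))"
  have \<tau>_sq: "\<tau>\<^sup>2 = ?N" and "0 \<le> \<tau>"
    by (simp_all add: \<tau>_def spec_norm_nonneg)
  have bias_entry: "\<rho> i * (1 - A $ i $ i)\<^sup>2 \<le> \<tau>\<^sup>2" for i
  proof -
    have "\<rho> i * ((mat 1 - A) $ i $ i)\<^sup>2 \<le> (\<Sum>k\<in>UNIV. \<rho> k * ((mat 1 - A) $ k $ i)\<^sup>2)"
      by (rule member_le_sum) (auto simp: \<rho>)
    also have "\<dots> \<le> ?N"
      unfolding diag_mat_congruence_nth[symmetric] by (rule diagonal_entry_le_spec_norm)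
    finally show ?thesis by (simp add: \<tau>_sq mat_def)
  qed
  have variance_diag: "(\<Sum>i\<in>UNIV. \<rho> i * \<mu> i * (A $ i $ i)\<^sup>2)
      \<le> frob_inner (diag_mat \<rho>) (A ** diag_mat \<mu> ** transpose A)"
    unfolding frob_inner_diag_mat_congruence
  proof (rule sum_mono)
    fix i
    have "(A $ i $ i)\<^sup>2 * \<mu> i \<le> (\<Sum>j\<in>UNIV. (A $ i $ j)\<^sup>2 * \<mu> j)"
      by (rule member_le_sum) (auto simp: \<mu>)
    from mult_left_mono[OF this \<rho>]
    show "\<rho> i * \<mu> i * (A $ i $ i)\<^sup>2 \<le> \<rho> i * (\<Sum>j\<in>UNIV. (A $ i $ j)\<^sup>2 * \<mu> j)"
      by (simp add: mult_ac)
  qed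
  have "(1 - \<tau> / sqrt (\<rho> i))\<^sup>2 * (c * \<rho> i * \<mu> i) \<le> c * (\<rho> i * \<mu> i * (A $ i $ i)\<^sup>2)"
    if "\<rho> i > \<tau>\<^sup>2" for i
  proof -
    have "0 \<le> c * \<rho> i * \<mu> i" using c \<rho> \<mu> by simp
    with shrinkage_factor_sq_le[OF \<open>0 \<le> \<tau>\<close> that bias_entry]
    have "(1 - \<tau> / sqrt (\<rho> i))\<^sup>2 * (c * \<rho> i * \<mu> i) \<le> (A $ i $ i)\<^sup>2 * (c * \<rho> i * \<mu> i)"
      by (rule mult_right_mono)
    then show ?thesis by (simp add: mult_ac)
  qed
  then have "(\<Sum>i | \<rho> i > \<tau>\<^sup>2. (1 - \<tau> / sqrt (\<rho> i))\<^sup>2 * (c * \<rho> i * \<mu> i))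
      \<le> (\<Sum>i | \<rho> i > \<tau>\<^sup>2. c * (\<rho> i * \<mu> i * (A $ i $ i)\<^sup>2))"
    by (intro sum_mono) auto
  also have "\<dots> \<le> (\<Sum>i\<in>UNIV. c * (\<rho> i * \<mu> i * (A $ i $ i)\<^sup>2))"
    using c \<rho> \<mu> by (intro sum_mono2) auto
  also have "\<dots> \<le> c * frob_inner (diag_mat \<rho>) (A ** diag_mat \<mu> ** transpose A)"
    unfolding sum_distrib_left[symmetric] using variance_diag c by (rule mult_left_mono)
  finally show ?thesis
    unfolding shrinkage_risk_def bias_variance_objective_def \<tau>_sq by simp
qed

lemma bias_variance_objective_shrinkage_le:
  fixes \<tau> :: real and \<rho> :: "'n::finite \<Rightarrow> real"
  assumes a: "0 \<le> a" and \<rho>: "\<And>i. 0 \<le> \<rho> i"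
  defines "s \<equiv> \<lambda>i. if \<rho> i > \<tau>\<^sup>2 then 1 - \<tau> / sqrt (\<rho> i) else 0"
  shows "bias_variance_objective a c \<rho> \<mu> (diag_mat s) \<le> shrinkage_risk a \<rho> (\<lambda>i. c * \<rho> i * \<mu> i) \<tau>"
proof -
  have "\<bar>(1 - s i) * \<rho> i * (1 - s i)\<bar> \<le> \<tau>\<^sup>2" for i
  proof (cases "\<rho> i > \<tau>\<^sup>2")
    case True
    then have "\<rho> i > 0" using zero_le_power2[of \<tau>] by linarith
    then have "(1 - s i) * \<rho> i * (1 - s i) = \<tau>\<^sup>2"
      using True by (simp add: s_def power2_eq_square)
    then show ?thesis by simp
  next
    case False
    then show ?thesis using \<rho>[of i] by (simp add: s_def)
  qed
  then have "spec_norm (transpose (mat 1 - diag_mat s) ** diag_mat \<rho> ** (mat 1 - diag_mat s)) \<le> \<tau>\<^sup>2"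
    unfolding mat_1_minus_diag_mat transpose_diag_mat diag_mat_mult_diag_mat
    by (rule spec_norm_diag_mat_le)
  then have "a * spec_norm (transpose (mat 1 - diag_mat s) ** diag_mat \<rho> ** (mat 1 - diag_mat s)) \<le> a * \<tau>\<^sup>2"
    using a by (rule mult_left_mono)
  moreover have "frob_inner (diag_mat \<rho>) (diag_mat s ** diag_mat \<mu> ** transpose (diag_mat s))
      = (\<Sum>i | \<rho> i > \<tau>\<^sup>2. (1 - \<tau> / sqrt (\<rho> i))\<^sup>2 * (\<rho> i * \<mu> i))"
  proof -
    have "(\<Sum>i\<in>UNIV. \<rho> i * (s i * \<mu> i * s i))
        = (\<Sum>i\<in>UNIV. if \<rho> i > \<tau>\<^sup>2 then (1 - \<tau> / sqrt (\<rho> i))\<^sup>2 * (\<rho> i * \<mu> i) else 0)"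
      by (rule sum.cong) (simp_all add: s_def power2_eq_square mult_ac)
    then show ?thesis
      unfolding transpose_diag_mat diag_mat_mult_diag_mat frob_inner_diag_mat
      by (simp add: sum.inter_filter[symmetric])
  qed
  ultimately show ?thesis
    unfolding bias_variance_objective_def shrinkage_risk_def
    by (simp add: sum_distrib_left mult_ac)
qed

lemma INF_bias_variance_objective_eq:
  assumes a: "0 \<le> a" and c: "0 \<le> c" and \<rho>: "\<And>i. 0 \<le> \<rho> i" and \<mu>: "\<And>i. 0 \<le> \<mu> i"
  shows "(INF A. bias_variance_objective a c \<rho> \<mu> A)
       = (INF \<tau>\<in>{0..}. shrinkage_risk a \<rho> (\<lambda>i. c * \<rho> i * \<mu> i) \<tau>)"
proof -
  have risk_nonneg: "0 \<le> shrinkage_risk a \<rho> (\<lambda>i. c * \<rho> i * \<mu> i) \<tau>" for \<tau>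
    using c \<rho> \<mu> by (intro shrinkage_risk_nonneg[OF a]) simp
  have "0 \<le> bias_variance_objective a c \<rho> \<mu> A" for A
    using risk_nonneg bias_variance_objective_ge_shrinkage_risk[where \<rho> = \<rho> and \<mu> = \<mu> and A = A and a = a, OF c \<rho> \<mu>]
    by (rule order_trans)
  then have bdd_objective: "bdd_below (range (bias_variance_objective a c \<rho> \<mu>))"
    by (intro bdd_belowI[of _ 0]) auto
  have bdd_risk: "bdd_below ((shrinkage_risk a \<rho> (\<lambda>i. c * \<rho> i * \<mu> i)) ` {0..})"
    using risk_nonneg by (intro bdd_belowI[of _ 0]) auto
  show ?thesis
  proof (rule antisym)
    show "(INF A. bias_variance_objective a c \<rho> \<mu> A)
        \<le> (INF \<tau>\<in>{0..}. shrinkage_risk a \<rho> (\<lambda>i. c * \<rho> i * \<mu> i) \<tau>)"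
      using bdd_objective
    proof (rule cINF_mono[rotated])
      fix \<tau> :: real
      show "\<exists>A\<in>UNIV. bias_variance_objective a c \<rho> \<mu> A \<le> shrinkage_risk a \<rho> (\<lambda>i. c * \<rho> i * \<mu> i) \<tau>"
        using bias_variance_objective_shrinkage_le[where \<rho> = \<rho> and c = c and \<mu> = \<mu>, OF a \<rho>] by blast
    qed simp
    show "(INF \<tau>\<in>{0..}. shrinkage_risk a \<rho> (\<lambda>i. c * \<rho> i * \<mu> i) \<tau>)
        \<le> (INF A. bias_variance_objective a c \<rho> \<mu> A)"
      using bdd_risk
    proof (rule cINF_mono[rotated])
      fix A :: "real^'a^'a"
      let ?\<tau> = "sqrt (spec_norm (transpose (mat 1 - A) ** diag_mat \<rho> ** (mat 1 - A)))"
      have "?\<tau> \<in> {0..}" by (simp add: spec_norm_nonneg)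
      with bias_variance_objective_ge_shrinkage_risk[where \<rho> = \<rho> and \<mu> = \<mu> and A = A and a = a, OF c \<rho> \<mu>]
      show "\<exists>\<tau>\<in>{0..}. shrinkage_risk a \<rho> (\<lambda>i. c * \<rho> i * \<mu> i) \<tau> \<le> bias_variance_objective a c \<rho> \<mu> A"
        by blast
    qed simp
  qed
qed

lemma threshold_risk_double_le_shrinkage_risk:
  assumes "0 \<le> \<tau>" and w: "\<And>i. 0 \<le> w i"
  shows "threshold_risk a \<rho> w (2 * \<tau>) \<le> 4 * shrinkage_risk a \<rho> w \<tau>"
proof -
  have "(\<Sum>i | \<rho> i > (2 * \<tau>)\<^sup>2. w i) \<le> (\<Sum>i | \<rho> i > (2 * \<tau>)\<^sup>2. 4 * ((1 - \<tau> / sqrt (\<rho> i))\<^sup>2 * w i))"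
  proof (rule sum_mono)
    fix i assume "i \<in> {i. \<rho> i > (2 * \<tau>)\<^sup>2}"
    then have "1 / 4 \<le> (1 - \<tau> / sqrt (\<rho> i))\<^sup>2"
      using shrinkage_factor_sq_ge_quarter[OF \<open>0 \<le> \<tau>\<close>] by (simp add: power_mult_distrib)
    then show "w i \<le> 4 * ((1 - \<tau> / sqrt (\<rho> i))\<^sup>2 * w i)"
      using mult_right_mono[OF _ w[of i]] by fastforce
  qed
  also have "\<dots> \<le> (\<Sum>i | \<rho> i > \<tau>\<^sup>2. 4 * ((1 - \<tau> / sqrt (\<rho> i))\<^sup>2 * w i))"
  proof (rule sum_mono2)
    show "{i. \<rho> i > (2 * \<tau>)\<^sup>2} \<subseteq> {i. \<rho> i > \<tau>\<^sup>2}"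
    proof
      fix i assume "i \<in> {i. \<rho> i > (2 * \<tau>)\<^sup>2}"
      then have "4 * \<tau>\<^sup>2 < \<rho> i" by (simp add: power_mult_distrib)
      then have "\<tau>\<^sup>2 < \<rho> i" using zero_le_power2[of \<tau>] by linarith
      then show "i \<in> {i. \<rho> i > \<tau>\<^sup>2}" by simp
    qed
  qed (use w in auto)
  finally show ?thesis
    unfolding threshold_risk_def shrinkage_risk_def
    by (simp add: power_mult_distrib sum_distrib_left distrib_left)
qed

lemma INF_threshold_risk_le_INF_shrinkage_risk:
  assumes a: "0 \<le> a" and w: "\<And>i. 0 \<le> w i"
  shows "1 / 4 * (INF \<tau>\<in>{0..}. threshold_risk a \<rho> w \<tau>) \<le> (INF \<tau>\<in>{0..}. shrinkage_risk a \<rho> w \<tau>)"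
proof (rule cINF_greatest)
  fix \<tau> :: real assume "\<tau> \<in> {0..}"
  have "bdd_below (threshold_risk a \<rho> w ` {0..})"
    using threshold_risk_nonneg[OF a w] by (intro bdd_belowI[of _ 0]) auto
  then have "(INF \<tau>\<in>{0..}. threshold_risk a \<rho> w \<tau>) \<le> threshold_risk a \<rho> w (2 * \<tau>)"
    using \<open>\<tau> \<in> {0..}\<close> by (intro cINF_lower) auto
  also have "\<dots> \<le> 4 * shrinkage_risk a \<rho> w \<tau>"
    using \<open>\<tau> \<in> {0..}\<close> w by (intro threshold_risk_double_le_shrinkage_risk) auto
  finally show "1 / 4 * (INF \<tau>\<in>{0..}. threshold_risk a \<rho> w \<tau>) \<le> shrinkage_risk a \<rho> w \<tau>"
    by simp
qed simp

theorem mainTheorem6: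
  fixes lam m r :: "'d::finite \<Rightarrow> real" and \<sigma> :: real and n :: nat
  assumes lam_pos: "\<And>i. lam i > 0"
    and m_pos: "\<And>i. m i > 0"
    and r_nonneg: "\<And>i. r i \<ge> 0"
    and sigma_pos: "\<sigma> > 0"
    and n_pos: "n \<ge> 1"
  defines "R' \<equiv> diag_mat (\<lambda>i. 1 / sqrt (m i)) ** diag_mat r ** diag_mat (\<lambda>i. 1 / sqrt (m i))"
    and "S' \<equiv> diag_mat (\<lambda>i. 1 / sqrt (m i)) ** diag_mat lam ** diag_mat (\<lambda>i. 1 / sqrt (m i))"
    and "K \<equiv> (\<lambda>\<tau>::real. {k. r k / m k > \<tau>\<^sup>2})"
  shows "(INF A :: real^'d^'d.
            1 / pi\<^sup>2 * spec_norm (transpose (mat 1 - A) ** R' ** (mat 1 - A))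
            + \<sigma>\<^sup>2 / real n * frob_inner R' (A ** matrix_inv S' ** transpose A))
         = (INF \<tau>\<in>{0::real..}. \<tau>\<^sup>2 / pi\<^sup>2
              + (\<Sum>i\<in>K \<tau>. (1 - \<tau> * sqrt (m i / r i))\<^sup>2 * (\<sigma>\<^sup>2 * r i / (real n * lam i))))
       \<and> (INF \<tau>\<in>{0::real..}. \<tau>\<^sup>2 / pi\<^sup>2
              + (\<Sum>i\<in>K \<tau>. (1 - \<tau> * sqrt (m i / r i))\<^sup>2 * (\<sigma>\<^sup>2 * r i / (real n * lam i))))
         \<ge> 1 / 4 * (INF \<tau>\<in>{0::real..}. \<tau>\<^sup>2 / pi\<^sup>2
              + (\<Sum>i\<in>K \<tau>. \<sigma>\<^sup>2 * r i / (real n * lam i)))"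
proof -
  define \<rho> where "\<rho> = (\<lambda>i. r i / m i)"
  define \<mu> where "\<mu> = (\<lambda>i. m i / lam i)"
  define c where "c = \<sigma>\<^sup>2 / real n"
  define w where "w = (\<lambda>i. c * \<rho> i * \<mu> i)"
  have "R' = diag_mat \<rho>"
    by (simp add: R'_def diag_mat_inv_sqrt_congruence m_pos \<rho>_def)
  moreover have "matrix_inv S' = diag_mat \<mu>"
    unfolding S'_def diag_mat_inv_sqrt_congruence[OF m_pos]
    using lam_pos m_pos by (subst matrix_inv_diag_mat) (simp_all add: \<mu>_def less_imp_neq[symmetric])
  ultimately have objective: "1 / pi\<^sup>2 * spec_norm (transpose (mat 1 - A) ** R' ** (mat 1 - A))
      + \<sigma>\<^sup>2 / real n * frob_inner R' (A ** matrix_inv S' ** transpose A)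
      = bias_variance_objective (1 / pi\<^sup>2) c \<rho> \<mu> A" for A
    by (simp add: bias_variance_objective_def c_def)
  have K: "K \<tau> = {i. \<rho> i > \<tau>\<^sup>2}" and w: "\<sigma>\<^sup>2 * r i / (real n * lam i) = w i" for \<tau> i
    using m_pos[of i] by (simp_all add: K_def w_def c_def \<rho>_def \<mu>_def)
  have shrinkage: "\<tau>\<^sup>2 / pi\<^sup>2 + (\<Sum>i\<in>K \<tau>. (1 - \<tau> * sqrt (m i / r i))\<^sup>2 * (\<sigma>\<^sup>2 * r i / (real n * lam i)))
      = shrinkage_risk (1 / pi\<^sup>2) \<rho> w \<tau>" for \<tau>
    by (simp add: shrinkage_risk_def K w \<rho>_def real_sqrt_divide)
  have threshold: "\<tau>\<^sup>2 / pi\<^sup>2 + (\<Sum>i\<in>K \<tau>. \<sigma>\<^sup>2 * r i / (real n * lam i)) = threshold_risk (1 / pi\<^sup>2) \<rho> w \<tau>" for \<tau>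
    by (simp add: threshold_risk_def K w)
  have a: "0 \<le> 1 / pi\<^sup>2" and c: "0 \<le> c" by (simp_all add: c_def)
  have \<rho>: "0 \<le> \<rho> i" and \<mu>: "0 \<le> \<mu> i" for i
    using lam_pos[of i] m_pos[of i] r_nonneg[of i] by (simp_all add: \<rho>_def \<mu>_def)
  have "(INF A. bias_variance_objective (1 / pi\<^sup>2) c \<rho> \<mu> A) = (INF \<tau>\<in>{0..}. shrinkage_risk (1 / pi\<^sup>2) \<rho> w \<tau>)"
    unfolding w_def by (rule INF_bias_variance_objective_eq[where \<rho> = \<rho> and \<mu> = \<mu>, OF a c \<rho> \<mu>])
  moreover have "1 / 4 * (INF \<tau>\<in>{0..}. threshold_risk (1 / pi\<^sup>2) \<rho> w \<tau>)
      \<le> (INF \<tau>\<in>{0..}. shrinkage_risk (1 / pi\<^sup>2) \<rho> w \<tau>)"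
    using c \<rho> \<mu> by (intro INF_threshold_risk_le_INF_shrinkage_risk[OF a]) (simp add: w_def)
  ultimately show ?thesis
    unfolding objective shrinkage threshold by simp
qed

end
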